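(* Let $\beta\in\mathbb{D}$ and $p\in\mathbb{D}$, and let $s=\beta+\bar\beta p$ (so that $(s,p)\in\mathbb{G}$). Then $$\kappa(s,p):=\sup_{z\in\mathbb{D}}\frac{1-|z|^2}{|1-sz+pz^2|}=\left|1-\frac{\tfrac12 s\bar\beta}{1+\sqrt{1-|\beta|^2}}\right|^{-1},$$ and the supremum is attained at exactly one point of $\mathbb{D}$, namely $z=\dfrac{\bar\beta}{1+\sqrt{1-|\beta|^2}}$.
   Context: $\mathbb{D}$ is the open unit disc and $\mathbb{G}=\{(z+w,zw):|z|<1,|w|<1\}$ is the symmetrised bidisc. (For $(s,p)\in\mathbb{G}$ one has $\beta=(s-\bar s p)/(1-|p|^2)$.) *)

theory Defs
  imports "HOL-Analysis.Analysis"
begin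

definition kappa_fun :: "complex \<Rightarrow> complex \<Rightarrow> complex \<Rightarrow> real" where
  "kappa_fun s p z = (1 - (cmod z)\<^sup>2) / cmod (1 - s * z + p * z\<^sup>2)"

definition kappa :: "complex \<Rightarrow> complex \<Rightarrow> real" where
  "kappa s p = (SUP z \<in> ball 0 1. kappa_fun s p z)"

end

theory Submission
  imports Defs
begin

(* Put r = sqrt(1 - |beta|^2) and a = cnj beta / (1 + r), so that
   |a|^2 (1 + r) = 1 - r and s = (1 + r)(cnj a + a p).  With A = 1 - p a^2 and
   B = cnj a^2 - p the denominator factors as
     (1 - s z + p z^2)(1 - |a|^2)^2 = r (A (1 - cnj a z)^2 - B (a - z)^2).
   Since |B| < |A| (a disc-automorphism inequality) and
   |1 - cnj a z|^2 - |a - z|^2 = (1 - |a|^2)(1 - |z|^2), the triangle inequality gives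
     |A (1 - cnj a z)^2 - B (a - z)^2| >= |A| (1 - |a|^2)(1 - |z|^2),
   strictly for z ~= a and with equality at z = a.  Hence a is the unique strict
   maximiser of kappa_fun s p on the disc, with value 1 / |1 - s a / 2|. *)

lemma moebius_norm_identity:
  fixes a z :: complex
  shows "(cmod (1 - cnj a * z))\<^sup>2 - (cmod (a - z))\<^sup>2 = (1 - (cmod a)\<^sup>2) * (1 - (cmod z)\<^sup>2)"
  unfolding cmod_power2 by (simp add: algebra_simps power2_eq_square)

lemma norm_diff_less_norm_one_minus_cnj:
  fixes a z :: complex
  assumes "cmod a < 1" and "cmod z < 1"
  shows "cmod (a - z) < cmod (1 - cnj a * z)"
proof -
  have "0 < (1 - (cmod a)\<^sup>2) * (1 - (cmod z)\<^sup>2)"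
    using assms by (simp add: power_less_one_iff)
  then have "(cmod (a - z))\<^sup>2 < (cmod (1 - cnj a * z))\<^sup>2"
    using moebius_norm_identity[of a z] by linarith
  then show ?thesis by (simp add: power_less_imp_less_base)
qed

text \<open>It is applied with c = cnj a and R = r.\<close>
lemma quadratic_factorisation:
  fixes a c R s p z :: "'a :: idom"
  assumes "a * c * (1 + R) = 1 - R" and "s = (1 + R) * (c + a * p)"
  shows "(1 - s * z + p * z\<^sup>2) * (1 - c * a)\<^sup>2
           = R * ((1 - p * a\<^sup>2) * (1 - c * z)\<^sup>2 - (c\<^sup>2 - p) * (a - z)\<^sup>2)"
  using assms by algebra

lemma half_sa_identity:
  fixes a c R s p :: "'a :: field_char_0"
  assumes "a * c * (1 + R) = 1 - R" and "s = (1 + R) * (c + a * p)"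
  shows "1 - s * a / 2 = (1 + R) * (1 - p * a\<^sup>2) / 2"
  using assms by (simp add: field_simps) algebra

lemma two_squares_strict_lower_bound:
  fixes a z A B :: complex
  assumes "cmod B < cmod A" and "z \<noteq> a"
  shows "cmod A * ((1 - (cmod a)\<^sup>2) * (1 - (cmod z)\<^sup>2))
           < cmod (A * (1 - cnj a * z)\<^sup>2 - B * (a - z)\<^sup>2)"
proof -
  have "cmod B * (cmod (a - z))\<^sup>2 < cmod A * (cmod (a - z))\<^sup>2"
    using assms by simp
  then have "cmod A * ((cmod (1 - cnj a * z))\<^sup>2 - (cmod (a - z))\<^sup>2)
               < cmod A * (cmod (1 - cnj a * z))\<^sup>2 - cmod B * (cmod (a - z))\<^sup>2"
    by (simp add: right_diff_distrib)
  also have "\<dots> \<le> cmod (A * (1 - cnj a * z)\<^sup>2 - B * (a - z)\<^sup>2)"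
    using norm_triangle_ineq2[of "A * (1 - cnj a * z)\<^sup>2" "B * (a - z)\<^sup>2"]
    by (simp add: norm_mult norm_power)
  finally show ?thesis by (simp only: moebius_norm_identity)
qed

lemma SUP_unique_strict_maximiser:
  fixes f :: "'a \<Rightarrow> real"
  assumes "a \<in> S" and "\<And>z. z \<in> S \<Longrightarrow> z \<noteq> a \<Longrightarrow> f z < f a"
  shows "(SUP z \<in> S. f z) = f a" and "{z \<in> S. f z = (SUP z \<in> S. f z)} = {a}"
proof -
  show sup: "(SUP z \<in> S. f z) = f a"
    by (rule cSup_eq_maximum) (use assms in \<open>force+\<close>)
  show "{z \<in> S. f z = (SUP z \<in> S. f z)} = {a}"
    unfolding sup using assms by force
qed

lemma kappa_fun_unique_maximiser:
  fixes a p s :: complex and r :: real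
  assumes r: "r > 0" and a: "cmod a < 1" and p: "cmod p < 1"
    and rel: "(cmod a)\<^sup>2 * (1 + r) = 1 - r"
    and s: "s = (1 + of_real r) * (cnj a + a * p)"
  shows "kappa_fun s p a = inverse (cmod (1 - s * a / 2))"
    and "\<And>z. cmod z < 1 \<Longrightarrow> z \<noteq> a \<Longrightarrow> kappa_fun s p z < kappa_fun s p a"
proof -
  define A where "A = 1 - p * a\<^sup>2"
  define B where "B = (cnj a)\<^sup>2 - p"
  define Q where "Q z = A * (1 - cnj a * z)\<^sup>2 - B * (a - z)\<^sup>2" for z
  define m where "m = 1 - (cmod a)\<^sup>2"
  have m_pos: "m > 0" using a by (simp add: m_def power_less_one_iff)
  have ca: "cnj a * a = of_real ((cmod a)\<^sup>2)"
    by (metis complex_norm_square mult.commute)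
  have crel: "a * cnj a * (1 + of_real r) = 1 - of_real r"
    using arg_cong[OF rel, of complex_of_real] ca by (simp add: mult.commute)
  have norm_one_minus_ca: "cmod (1 - cnj a * a) = m"
  proof -
    have "1 - cnj a * a = of_real m" using ca by (simp add: m_def)
    then show ?thesis using m_pos by simp
  qed
  text \<open>|B| < |A|: the disc-automorphism inequality for cnj p and a^2.\<close>
  have B_less_A: "cmod B < cmod A"
  proof -
    have "cmod (cnj p - a\<^sup>2) < cmod (1 - cnj (cnj p) * a\<^sup>2)"
      using a p by (intro norm_diff_less_norm_one_minus_cnj) (auto simp: norm_power power_less_one_iff)
    moreover have "cmod B = cmod (cnj p - a\<^sup>2)"
    proof -
      have "B = cnj (a\<^sup>2 - cnj p)" by (simp add: B_def)
      then show ?thesis by (simp only: complex_mod_cnj norm_minus_commute)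
    qed
    ultimately show ?thesis by (simp add: A_def)
  qed
  have A_pos: "cmod A > 0" using B_less_A by (meson le_less_trans norm_ge_zero)
  have kappa_Q: "kappa_fun s p z = (1 - (cmod z)\<^sup>2) * m\<^sup>2 / (r * cmod (Q z))" for z
  proof -
    have "(1 - s * z + p * z\<^sup>2) * (1 - cnj a * a)\<^sup>2 = of_real r * Q z"
      unfolding Q_def A_def B_def by (rule quadratic_factorisation[OF crel s])
    then have "cmod (1 - s * z + p * z\<^sup>2) * m\<^sup>2 = r * cmod (Q z)"
      using r norm_one_minus_ca by (metis norm_mult norm_power norm_of_real abs_of_pos)
    then show ?thesis
      using m_pos unfolding kappa_fun_def m_def
      by (metis mult_divide_mult_cancel_right power_not_zero less_irrefl)
  qed
  have kappa_at_a: "kappa_fun s p a = m / (r * cmod A)"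
  proof -
    have "cmod (Q a) = cmod A * m\<^sup>2"
      using norm_one_minus_ca by (simp add: Q_def norm_mult norm_power)
    then show ?thesis
      using kappa_Q[of a] m_pos by (simp add: m_def power2_eq_square)
  qed
  show "kappa_fun s p a = inverse (cmod (1 - s * a / 2))"
  proof -
    have "1 - s * a / 2 = of_real (1 + r) * A / 2"
      using half_sa_identity[OF crel s] by (simp add: A_def)
    then have "cmod (1 - s * a / 2) = \<bar>1 + r\<bar> * cmod A / 2"
      by (simp only: norm_divide norm_mult norm_of_real) simp
    then have "cmod (1 - s * a / 2) = (1 + r) * cmod A / 2"
      using r by simp
    moreover have "m = 2 * r / (1 + r)"
      using rel r by (simp add: m_def field_simps)
    ultimately show ?thesis
      using r A_pos by (simp add: kappa_at_a divide_simps)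
  qed
  show "kappa_fun s p z < kappa_fun s p a" if z: "cmod z < 1" and za: "z \<noteq> a" for z
  proof -
    define u where "u = 1 - (cmod z)\<^sup>2"
    define L where "L = cmod A * (m * u)"
    have u_pos: "u > 0" using z by (simp add: u_def power_less_one_iff)
    have L_pos: "L > 0" using u_pos A_pos m_pos by (simp add: L_def)
    have L_less: "L < cmod (Q z)"
      unfolding L_def m_def u_def Q_def using two_squares_strict_lower_bound[OF B_less_A za] .
    have "kappa_fun s p z < u * m\<^sup>2 / (r * L)"
      unfolding kappa_Q u_def[symmetric] using L_pos L_less r u_pos m_pos
      by (intro divide_strict_left_mono) (auto intro!: mult_pos_pos)
    also have "\<dots> = kappa_fun s p a"
      using u_pos m_pos A_pos r by (simp add: kappa_at_a L_def power2_eq_square)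
    finally show ?thesis .
  qed
qed

lemma beta_parametrisation:
  fixes \<beta> p a :: complex and r :: real
  assumes \<beta>: "cmod \<beta> < 1"
    and r: "r = sqrt (1 - (cmod \<beta>)\<^sup>2)" and a: "a = cnj \<beta> / (1 + complex_of_real r)"
  shows "r > 0" and "cmod a < 1" and "(cmod a)\<^sup>2 * (1 + r) = 1 - r"
    and "\<beta> + cnj \<beta> * p = (1 + of_real r) * (cnj a + a * p)"
proof -
  have "(cmod \<beta>)\<^sup>2 < 1" using \<beta> by (simp add: power_less_one_iff)
  then show r_pos: "r > 0" using r by simp
  have r2: "r\<^sup>2 = 1 - (cmod \<beta>)\<^sup>2" using r \<open>(cmod \<beta>)\<^sup>2 < 1\<close> by simp
  have one_plus_r: "1 + complex_of_real r = of_real (1 + r)" by simp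
  have norm_a: "cmod a = cmod \<beta> / (1 + r)"
    using r_pos unfolding a one_plus_r norm_divide norm_of_real complex_mod_cnj by simp
  show "cmod a < 1" using norm_a \<beta> r_pos by (simp add: divide_less_eq)
  have "(cmod a)\<^sup>2 * (1 + r) = (cmod \<beta>)\<^sup>2 / (1 + r)"
    using norm_a r_pos by (simp add: power2_eq_square field_simps)
  also have "\<dots> = (1 - r) * (1 + r) / (1 + r)"
    using r2 by (simp add: power2_eq_square algebra_simps)
  finally show "(cmod a)\<^sup>2 * (1 + r) = 1 - r"
    using r_pos by simp
  have "1 + complex_of_real r \<noteq> 0"
    using r_pos unfolding one_plus_r of_real_eq_0_iff by simp
  then have "(1 + of_real r) * cnj a = \<beta>" and "(1 + of_real r) * a = cnj \<beta>"
    unfolding a by simp_all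
  then show "\<beta> + cnj \<beta> * p = (1 + of_real r) * (cnj a + a * p)"
    by (simp add: distrib_left mult.assoc [symmetric])
qed

theorem proposition4p2:
  fixes \<beta> p s :: complex
  assumes "\<beta> \<in> ball 0 1" and "p \<in> ball 0 1"
    and "s = \<beta> + cnj \<beta> * p"
  shows "kappa s p
           = inverse (cmod (1 - (s * cnj \<beta> / 2) / (1 + complex_of_real (sqrt (1 - (cmod \<beta>)\<^sup>2)))))
         \<and> {z \<in> ball 0 1. kappa_fun s p z = kappa s p}
           = {cnj \<beta> / (1 + complex_of_real (sqrt (1 - (cmod \<beta>)\<^sup>2)))}"
proof -
  define r where "r = sqrt (1 - (cmod \<beta>)\<^sup>2)"
  define a where "a = cnj \<beta> / (1 + complex_of_real r)"
  have \<beta>: "cmod \<beta> < 1" and p: "cmod p < 1" using assms(1,2) by auto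
  note param = beta_parametrisation[OF \<beta> r_def a_def]
  have s: "s = (1 + of_real r) * (cnj a + a * p)" using assms(3) param(4) by simp
  note maximiser = kappa_fun_unique_maximiser[OF param(1,2) p param(3) s]
  have "a \<in> ball 0 1" using param(2) by simp
  note sup = SUP_unique_strict_maximiser[of a "ball 0 1" "kappa_fun s p", folded kappa_def]
  have "kappa s p = kappa_fun s p a" and "{z \<in> ball 0 1. kappa_fun s p z = kappa s p} = {a}"
    using sup \<open>a \<in> ball 0 1\<close> maximiser(2) by auto
  moreover have closed_form: "(s * cnj \<beta> / 2) / (1 + complex_of_real r) = s * a / 2"
    unfolding a_def by simp
  ultimately show ?thesis
    using maximiser(1) unfolding r_def[symmetric] closed_form a_def[symmetric] by simp
qed

end
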